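(* Let $U=(u_{ij})\in\mathcal{U}_d(\mathbb{C})$ and let $R_U=(r_{ij})$ be a real matrix with non-negative entries such that $r_{ij}=0$ iff $u_{ij}=0$ and $r_{ij}>0$ otherwise. Then there exist $D_1,D_2\in\mathcal{DU}_d(\mathbb{C})$ such that for all $k,l\in\{1,\dots,d\}$, $$(R_U^TR_U)_{kl}=0\iff (D_1U^\dagger D_2U)_{kl}=0.$$
   Context: $\mathcal{U}_d(\mathbb{C})$ denotes the group of $d\times d$ unitary matrices and $\mathcal{DU}_d(\mathbb{C})$ its subgroup of diagonal unitary matrices. *)

theory Defs
  imports "HOL-Analysis.Analysis"
begin

definition adjoint_mat :: "complex^'n^'n \<Rightarrow> complex^'n^'n" where
  "adjoint_mat U = (\<chi> i j. cnj (U $ j $ i))"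

text \<open>The unitary group U_d(C), d = CARD('n).\<close>
definition unitary_mat :: "complex^'n^'n \<Rightarrow> bool" where
  "unitary_mat U \<longleftrightarrow> adjoint_mat U ** U = mat 1 \<and> U ** adjoint_mat U = mat 1"

definition diag_unitary_mat :: "complex^'n^'n \<Rightarrow> bool" where
  "diag_unitary_mat D \<longleftrightarrow> unitary_mat D \<and> (\<forall>i j. i \<noteq> j \<longrightarrow> D $ i $ j = 0)"

end

theory Submission
  imports Defs "HOL-Computational_Algebra.Polynomial"
begin

text \<open>
  Take D1 = 1 and D2 = diag(d) with unimodular d. The (k,l) entry of adjoint(U) D2 U is the sum
  over i of conj(u_ik) u_il d_i, while (transpose(R) R)_kl vanishes exactly when every term
  conj(u_ik) u_il vanishes, since R is non-negative with the zero pattern of U. So it suffices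
  to choose d avoiding all cancellations. Setting d_i = w^(e i) for an injection e into the
  naturals turns each of the finitely many non-trivial sums into a non-zero polynomial in w,
  and the unit circle is infinite, so some w on it is a root of none of them.
\<close>

definition diag_mat :: "('n \<Rightarrow> 'a::zero) \<Rightarrow> 'a^'n^'n" where
  "diag_mat d = (\<chi> i j. if i = j then d i else 0)"

lemma diag_mat_1: "diag_mat (\<lambda>_. 1) = mat 1"
  by (simp add: diag_mat_def mat_def)

lemma diag_unitary_mat_diag_mat:
  fixes d :: "'n::finite \<Rightarrow> complex"
  assumes "\<forall>i. norm (d i) = 1"
  shows "diag_unitary_mat (diag_mat d)"
proof -
  have "cnj (d i) * d i = 1" "d i * cnj (d i) = 1" for i
    using assms complex_norm_square[of "d i"] by (simp_all add: mult.commute)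
  then show ?thesis
    unfolding diag_unitary_mat_def unitary_mat_def
    by (auto simp: diag_mat_def adjoint_mat_def matrix_matrix_mult_def mat_def vec_eq_iff
             if_distrib[where f="\<lambda>x. x * _"] if_distrib[where f="\<lambda>x. _ * x"] cong: if_cong)
qed

lemma adjoint_mat_mult_diag_mat_mult_entry:
  fixes U :: "complex^'n^'n"
  shows "(adjoint_mat U ** diag_mat d ** U) $ k $ l = (\<Sum>i\<in>UNIV. cnj (U$i$k) * d i * U$i$l)"
  by (simp add: diag_mat_def adjoint_mat_def matrix_matrix_mult_def
      if_distrib[where f="\<lambda>x. _ * x"] cong: if_cong)

lemma transpose_mult_self_eq_0_iff:
  fixes R :: "real^'n^'m"
  assumes "\<forall>i j. 0 \<le> R$i$j"
  shows "(transpose R ** R) $ k $ l = 0 \<longleftrightarrow> (\<forall>i. R$i$k = 0 \<or> R$i$l = 0)"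
proof -
  have "(transpose R ** R) $ k $ l = (\<Sum>i\<in>UNIV. R$i$k * R$i$l)"
    by (simp add: matrix_matrix_mult_def transpose_def)
  also have "\<dots> = 0 \<longleftrightarrow> (\<forall>i. R$i$k * R$i$l = 0)"
    using assms by (subst sum_nonneg_eq_0_iff) auto
  finally show ?thesis by simp
qed

lemma infinite_unit_circle: "infinite (sphere (0::complex) 1)"
proof -
  have "uncountable (sphere (0::complex) 1)"
    by (rule connected_uncountable[where a=1 and b="-1"]) (auto intro: connected_sphere)
  then show ?thesis
    using countable_finite by blast
qed

lemma exists_unimodular_not_root:
  fixes P :: "complex poly set"
  assumes "finite P" and "0 \<notin> P"
  shows "\<exists>w. norm w = 1 \<and> (\<forall>p\<in>P. poly p w \<noteq> 0)"
proof -
  have "\<Prod>P \<noteq> 0"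
    using assms by simp
  then have "finite {w. poly (\<Prod>P) w = 0}"
    by (rule poly_roots_finite)
  then have "\<not> sphere 0 1 \<subseteq> {w. poly (\<Prod>P) w = 0}"
    using infinite_unit_circle finite_subset by blast
  then obtain w where "w \<in> sphere 0 1" and "poly (\<Prod>P) w \<noteq> 0"
    by blast
  then show ?thesis
    using assms(1) by (auto simp: poly_prod)
qed

lemma coeff_sum_monom_inj:
  assumes "finite I" and "inj_on e I" and "j \<in> I"
  shows "coeff (\<Sum>i\<in>I. monom (c i) (e i)) (e j) = c j"
proof -
  have "coeff (\<Sum>i\<in>I. monom (c i) (e i)) (e j) = (\<Sum>i\<in>I. if i = j then c i else 0)"
    unfolding coeff_sum coeff_monom
    using assms(2,3) by (intro sum.cong) (auto simp: inj_on_def)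
  also have "\<dots> = c j"
    using assms(1,3) by simp
  finally show ?thesis .
qed

lemma exists_unimodular_weights_nonzero_sums:
  fixes c :: "'k \<Rightarrow> 'n::finite \<Rightarrow> complex"
  assumes "finite K"
  shows "\<exists>d. (\<forall>i. norm (d i) = 1) \<and> (\<forall>k\<in>K. (\<exists>i. c k i \<noteq> 0) \<longrightarrow> (\<Sum>i\<in>UNIV. c k i * d i) \<noteq> 0)"
proof -
  obtain e :: "'n \<Rightarrow> nat" where e: "inj e"
    using finite_imp_inj_to_nat_seg[OF finite_class.finite_UNIV] by auto
  define p where "p k = (\<Sum>i\<in>UNIV. monom (c k i) (e i))" for k
  have "p k \<noteq> 0" if "c k j \<noteq> 0" for k j
    using that coeff_sum_monom_inj[OF finite_class.finite_UNIV e, of j "c k"] by (auto simp: p_def)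
  then have "0 \<notin> p ` {k\<in>K. \<exists>i. c k i \<noteq> 0}"
    by force
  then obtain w where "norm w = 1" and "\<forall>q\<in>p ` {k\<in>K. \<exists>i. c k i \<noteq> 0}. poly q w \<noteq> 0"
    using exists_unimodular_not_root[of "p ` {k\<in>K. \<exists>i. c k i \<noteq> 0}"] assms by auto
  moreover have "poly (p k) w = (\<Sum>i\<in>UNIV. c k i * w ^ e i)" for k
    by (simp add: p_def poly_sum poly_monom)
  ultimately show ?thesis
    by (intro exI[of _ "\<lambda>i. w ^ e i"]) (auto simp: norm_power)
qed

theorem corollary23:
  fixes U :: "complex^'n^'n" and R :: "real^'n^'n"
  assumes "unitary_mat U"
    and "\<forall>i j. R $ i $ j \<ge> 0"
    and "\<forall>i j. R $ i $ j = 0 \<longleftrightarrow> U $ i $ j = 0"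
    and "\<forall>i j. U $ i $ j \<noteq> 0 \<longrightarrow> R $ i $ j > 0"
  shows "\<exists>D1 D2. diag_unitary_mat D1 \<and> diag_unitary_mat D2 \<and>
           (\<forall>k l. (transpose R ** R) $ k $ l = 0 \<longleftrightarrow>
                  (D1 ** adjoint_mat U ** D2 ** U) $ k $ l = 0)"
proof -
  define c where "c kl i = cnj (U $ i $ fst kl) * U $ i $ snd kl" for kl i
  obtain d where d_norm: "\<forall>i. norm (d i) = 1"
    and d_sum: "\<forall>kl\<in>UNIV. (\<exists>i. c kl i \<noteq> 0) \<longrightarrow> (\<Sum>i\<in>UNIV. c kl i * d i) \<noteq> 0"
    using exists_unimodular_weights_nonzero_sums[OF finite_class.finite_UNIV, of c] by blast
  have "(transpose R ** R) $ k $ l = 0 \<longleftrightarrow> (mat 1 ** adjoint_mat U ** diag_mat d ** U) $ k $ l = 0"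
    for k l
  proof -
    have "(transpose R ** R) $ k $ l = 0 \<longleftrightarrow> (\<forall>i. c (k, l) i = 0)"
      using assms(2,3) by (simp add: transpose_mult_self_eq_0_iff c_def)
    moreover have "(mat 1 ** adjoint_mat U ** diag_mat d ** U) $ k $ l = (\<Sum>i\<in>UNIV. c (k, l) i * d i)"
      by (simp add: matrix_mul_lid adjoint_mat_mult_diag_mat_mult_entry c_def ac_simps)
    ultimately show ?thesis
      using d_sum by auto
  qed
  moreover have "diag_unitary_mat (mat 1 :: complex^'n^'n)"
    using diag_unitary_mat_diag_mat[of "\<lambda>_. 1"] by (simp add: diag_mat_1)
  ultimately show ?thesis
    using diag_unitary_mat_diag_mat[OF d_norm] by blast
qed

end
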